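(* Let $H$ be a $6\times 6$ complex Hadamard matrix. Then $H$ is equivalent to a member of the family $F_6^{(2)}$ if and only if $\eta_c(H)\neq 0$ or $\eta_r(H)\neq 0$.
   Context: A $d\times d$ complex Hadamard matrix has unimodular entries and pairwise orthogonal columns. Two complex Hadamard matrices $H_1,H_2$ are equivalent if $H_2=D_1P_1H_1P_2D_2$ with $D_1,D_2$ diagonal unitary and $P_1,P_2$ permutation matrices. The dephased form of $H$ is the unique matrix $D_1HD_2$ ($D_1,D_2$ diagonal unitary) whose first row and first column consist of $1$'s. Two distinct columns $C_A,C_B$ form an ER pair if $\overline{(C_A)_j}(C_B)_j\in\{1,-1\}$ for every $j$ (analogously for rows). $\eta_c(H)$ (resp. $\eta_r(H)$) is the maximal number of pairwise disjoint ER pairs of columns (resp. rows) of the dephased form of $H$. Let $F_6$ be the Fourier matrix $(F_6)_{j,k}=\omega^{jk}$, $\omega=e^{2\pi i/6}$, $j,k=0,\dots,5$. For $a,b\in\mathbb{R}$ let $R(a,b)$ be the real $6\times6$ matrix with $R(a,b)_{j,k}=a$ if $j$ is odd and $k\in\{1,4\}$, $R(a,b)_{j,k}=b$ if $j$ is odd and $k\in\{2,5\}$, and $R(a,b)_{j,k}=0$ otherwise. The family $F_6^{(2)}$ is the set of matrices $F_6\circ\exp(iR(a,b))$ and $F_6\circ\exp(iR(a,b)^t)$ for $a,b\in\mathbb{R}$, where $\circ$ is the entrywise product and $\exp$ is applied entrywise. *)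

theory Defs
  imports Complex_Main
begin

text \<open>A 6x6 complex matrix is represented as a function nat => nat => complex;
  only the entries with indices in {0..<6} are meaningful.\<close>

type_synonym cmat = "nat \<Rightarrow> nat \<Rightarrow> complex"

definition hadamard6 :: "cmat \<Rightarrow> bool" where
  "hadamard6 H \<longleftrightarrow>
     (\<forall>j<6. \<forall>k<6. cmod (H j k) = 1) \<and>
     (\<forall>k<6. \<forall>l<6. k \<noteq> l \<longrightarrow> (\<Sum>j<6. cnj (H j k) * H j l) = 0)"

definition equiv6 :: "cmat \<Rightarrow> cmat \<Rightarrow> bool" where
  "equiv6 H1 H2 \<longleftrightarrow>
     (\<exists>d1 d2 :: nat \<Rightarrow> complex. \<exists>p1 p2 :: nat \<Rightarrow> nat.
        (\<forall>j<6. cmod (d1 j) = 1) \<and> (\<forall>k<6. cmod (d2 k) = 1) \<and>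
        bij_betw p1 {..<6} {..<6} \<and> bij_betw p2 {..<6} {..<6} \<and>
        (\<forall>j<6. \<forall>k<6. H2 j k = d1 j * H1 (p1 j) (p2 k) * d2 k))"

definition dephased :: "cmat \<Rightarrow> cmat" where
  "dephased H = (THE M.
     (\<exists>d1 d2 :: nat \<Rightarrow> complex.
        (\<forall>j<6. cmod (d1 j) = 1) \<and> (\<forall>k<6. cmod (d2 k) = 1) \<and>
        (\<forall>j<6. \<forall>k<6. M j k = d1 j * H j k * d2 k)) \<and>
     (\<forall>k<6. M 0 k = 1) \<and> (\<forall>j<6. M j 0 = 1) \<and>
     (\<forall>j k. \<not> (j < 6 \<and> k < 6) \<longrightarrow> M j k = 0))"

definition ER_cols :: "cmat \<Rightarrow> nat \<Rightarrow> nat \<Rightarrow> bool" where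
  "ER_cols M a b \<longleftrightarrow> a < 6 \<and> b < 6 \<and> a \<noteq> b \<and>
     (\<forall>j<6. cnj (M j a) * M j b \<in> {1, -1})"

definition ER_rows :: "cmat \<Rightarrow> nat \<Rightarrow> nat \<Rightarrow> bool" where
  "ER_rows M a b \<longleftrightarrow> a < 6 \<and> b < 6 \<and> a \<noteq> b \<and>
     (\<forall>k<6. cnj (M a k) * M b k \<in> {1, -1})"

definition eta_c :: "cmat \<Rightarrow> nat" where
  "eta_c H = Max {card P | P. P \<subseteq> {{a, b} | a b. ER_cols (dephased H) a b} \<and> pairwise disjnt P}"

definition eta_r :: "cmat \<Rightarrow> nat" where
  "eta_r H = Max {card P | P. P \<subseteq> {{a, b} | a b. ER_rows (dephased H) a b} \<and> pairwise disjnt P}"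

definition omega6 :: complex where
  "omega6 = cis (2 * pi / 6)"

definition F6 :: cmat where
  "F6 j k = (if j < 6 \<and> k < 6 then omega6 ^ (j * k) else 0)"

definition Rmat :: "real \<Rightarrow> real \<Rightarrow> nat \<Rightarrow> nat \<Rightarrow> real" where
  "Rmat a b j k = (if j < 6 \<and> odd j \<and> k \<in> {1, 4} then a
                   else if j < 6 \<and> odd j \<and> k \<in> {2, 5} then b else 0)"

definition F6R :: "real \<Rightarrow> real \<Rightarrow> cmat" where
  "F6R a b j k = F6 j k * exp (\<i> * complex_of_real (Rmat a b j k))"

definition F6Rt :: "real \<Rightarrow> real \<Rightarrow> cmat" where
  "F6Rt a b j k = F6 j k * exp (\<i> * complex_of_real (Rmat a b k j))"

definition in_F6_2 :: "cmat \<Rightarrow> bool" where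
  "in_F6_2 M \<longleftrightarrow> (\<exists>a b. M = F6R a b \<or> M = F6Rt a b)"

end

theory Submission
  imports Defs "Jordan_Normal_Form.Determinant"
begin

text \<open>
  An ER pair of columns of the dephased form of \<open>H\<close> amounts to two columns \<open>a, b\<close> of \<open>H\<close> with
  \<open>H j b = c e\<^sub>j H j a\<close>, \<open>e\<^sub>j = \<plusminus>1\<close>. Orthogonality of these columns forces three signs \<open>+1\<close>
  (rows \<open>S\<close>) and three signs \<open>-1\<close> (rows \<open>R\<close>), and orthogonality of any other column to both
  makes its sums over \<open>S\<close> and over \<open>R\<close> vanish. Three unimodular numbers with zero sum are
  \<open>x, x p, x p\<^sup>2\<close> for a primitive cube root of unity \<open>p\<close>, so each of the four remaining columns
  carries a pair \<open>(p, q)\<close> of such roots. Orthogonality of two of them forces \<open>p = p' \<longleftrightarrow> q = q'\<close>,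
  and three with equal \<open>p\<close> would give three mutually orthogonal vectors in \<open>\<complex>\<^sup>2\<close>; hence the
  four columns split into two pairs, which after permuting and rephasing is exactly the pattern
  of \<open>F\<^sub>6 \<circ> exp (i R(\<alpha>, \<beta>))\<close>. Conversely columns \<open>0\<close> and \<open>3\<close> of that matrix are sign-related,
  a property preserved by equivalence; rows are handled by transposition.
\<close>

section \<open>Unimodular numbers and sixth roots of unity\<close>

lemma all_less_6_iff: "(\<forall>i<6::nat. P i) \<longleftrightarrow> P 0 \<and> P 1 \<and> P 2 \<and> P 3 \<and> P 4 \<and> P 5"
proof
  assume "P 0 \<and> P 1 \<and> P 2 \<and> P 3 \<and> P 4 \<and> P 5"
  moreover have "i = 0 \<or> i = 1 \<or> i = 2 \<or> i = 3 \<or> i = 4 \<or> i = 5" if "i < 6" for i :: nat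
    using that by arith
  ultimately show "\<forall>i<6. P i"
    by blast
qed simp

lemma unimodular_cnj_mult: "cmod z = 1 \<Longrightarrow> cnj z * z = 1"
  by (metis complex_norm_square mult.commute of_real_1 power_one)

lemma unimodular_cnj_eq_inverse: "cmod z = 1 \<Longrightarrow> cnj z = inverse z"
  by (metis unimodular_cnj_mult inverse_unique mult.commute)

lemma exp_i_Arg:
  assumes "cmod z = 1"
  shows "exp (\<i> * complex_of_real (Arg z)) = z"
proof -
  have "cis (Arg z) = sgn z"
    using assms by (intro cis_Arg) auto
  then show ?thesis
    using assms by (simp add: cis_conv_exp sgn_div_norm)
qed

lemma omega6_pow_3: "omega6 ^ 3 = -1"
  by (simp add: omega6_def DeMoivre)

lemma omega6_pow_reduce: "6 \<le> n \<Longrightarrow> omega6 ^ n = omega6 ^ (n - 6)"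
proof -
  assume "6 \<le> n"
  then have "omega6 ^ n = omega6 ^ (n - 6) * (omega6 ^ 3)\<^sup>2"
    by (simp flip: power_add power_mult)
  then show ?thesis
    by (simp add: omega6_pow_3)
qed

lemma omega6_mult_pow_numeral: "omega6 * omega6 ^ numeral n = omega6 ^ (numeral n + 1)"
  by (metis Suc_eq_plus1 power_Suc)

lemma omega6_pow_2: "omega6 ^ 2 = Complex (-1/2) (sqrt 3 / 2)"
proof -
  have omega6: "omega6 = Complex (1/2) (sqrt 3 / 2)"
    by (simp add: omega6_def cis.ctr cos_60 sin_60 flip: divide_divide_eq_left)
  show ?thesis
    by (simp add: omega6 power2_eq_square complex_eq_iff)
qed

lemma omega6_pow_4: "omega6 ^ 4 = Complex (-1/2) (- sqrt 3 / 2)"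
proof -
  have "omega6 ^ 4 = omega6 ^ 2 * omega6 ^ 2"
    by (simp flip: power_add)
  also have "\<dots> = Complex (-1/2) (- sqrt 3 / 2)"
    unfolding omega6_pow_2 by (simp add: complex_eq_iff)
  finally show ?thesis .
qed

abbreviation cube_roots :: "complex set" where
  "cube_roots \<equiv> {omega6 ^ 2, omega6 ^ 4}"

lemma cube_roots_eq: "cube_roots = {Complex (-1/2) (sqrt 3 / 2), Complex (-1/2) (- sqrt 3 / 2)}"
  by (simp add: omega6_pow_2 omega6_pow_4)

lemma cube_rootE:
  assumes "p \<in> cube_roots"
  obtains "p = Complex (-1/2) (sqrt 3 / 2)" | "p = Complex (-1/2) (- sqrt 3 / 2)"
  using assms unfolding cube_roots_eq by blast

lemma omega6_cube_roots_square: "(omega6 ^ 2)\<^sup>2 = omega6 ^ 4" "(omega6 ^ 4)\<^sup>2 = omega6 ^ 2"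
  using omega6_pow_reduce[of 8] by (simp_all flip: power_mult)

lemma omega6_pow_2_neq_pow_4: "omega6 ^ 2 \<noteq> omega6 ^ 4"
  by (simp add: omega6_pow_2 omega6_pow_4)

lemma cube_root_sum_zero: "p \<in> cube_roots \<Longrightarrow> 1 + p + p\<^sup>2 = 0"
  by (elim cube_rootE; hypsubst; simp add: power2_eq_square complex_eq_iff)

lemma cube_root_inner:
  assumes "p \<in> cube_roots" "q \<in> cube_roots"
  shows "1 + cnj p * q + cnj (p\<^sup>2) * q\<^sup>2 = (if p = q then 3 else 0)"
  using assms by (elim cube_rootE; hypsubst; simp add: complex_eq_iff power2_eq_square)

lemma unimodular_one_plus:
  assumes "cmod t = 1" "cmod (1 + t) = 1"
  shows "t \<in> cube_roots"
proof -
  have a: "Re t ^ 2 + Im t ^ 2 = 1" using assms(1) cmod_power2[of t] by simp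
  have b: "(1 + Re t) ^ 2 + Im t ^ 2 = 1" using assms(2) cmod_power2[of "1 + t"] by simp
  have re: "Re t = -1/2" using a b by (simp add: power2_eq_square algebra_simps)
  then have "Im t ^ 2 = (sqrt 3 / 2) ^ 2" using a by (simp add: power2_eq_square)
  then have "Im t = sqrt 3 / 2 \<or> Im t = - (sqrt 3 / 2)" using power2_eq_iff by blast
  then show ?thesis using re unfolding cube_roots_eq by (auto simp: complex_eq_iff)
qed

lemma unimodular_sum_three_zero:
  assumes "cmod x = 1" "cmod y = 1" "cmod w = 1" "x + y + w = 0"
  shows "\<exists>p\<in>cube_roots. y = x * p \<and> w = x * p\<^sup>2"
proof -
  have "x \<noteq> 0" using assms(1) by auto
  define t where "t = y / x"
  have y: "y = x * t" using \<open>x \<noteq> 0\<close> by (simp add: t_def)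
  have w: "w = - x * (1 + t)" using assms(4) y by (simp add: algebra_simps eq_neg_iff_add_eq_0)
  have "cmod t = 1" "cmod (1 + t) = 1"
    using assms(1-3) w \<open>x \<noteq> 0\<close> by (simp_all add: t_def norm_divide norm_mult)
  then have t: "t \<in> cube_roots" by (rule unimodular_one_plus)
  moreover have "- (1 + t) = t\<^sup>2"
    using cube_root_sum_zero[OF t] neg_eq_iff_add_eq_0 by blast
  ultimately have "w = x * t\<^sup>2"
    using w by (metis mult_minus_left mult_minus_right)
  then show ?thesis using y t by blast
qed

lemma unimodular_orthogonal_pair:
  assumes "cmod x = 1" "cmod y = 1" "cnj x * x' + cnj y * y' = 0"
  shows "x' * y = - x * y'"
proof -
  have "x * y * (cnj x * x' + cnj y * y') = (cnj x * x) * x' * y + (cnj y * y) * x * y'"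
    by (simp add: algebra_simps)
  then show ?thesis
    using assms by (simp add: unimodular_cnj_mult eq_neg_iff_add_eq_0)
qed

lemma unimodular_orthogonal_pair_phase:
  assumes "cmod x = 1" "cmod y = 1" "cnj x * x' + cnj y * y' = 0"
  shows "\<exists>A. cmod A = 1 \<and> y = x * omega6 ^ k * A \<and> y' = x' * omega6 ^ (k + 3) * A"
proof -
  have nz: "x \<noteq> 0" "omega6 \<noteq> 0"
    using assms(1) by (auto simp: omega6_def)
  define A where "A = y / (x * omega6 ^ k)"
  have "cmod A = 1"
    using assms(1,2) by (simp add: A_def norm_divide norm_mult norm_power omega6_def)
  moreover have "y = x * omega6 ^ k * A"
    using nz by (simp add: A_def)
  moreover have "y' = x' * omega6 ^ (k + 3) * A"
    using unimodular_orthogonal_pair[OF assms] nz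
    by (simp add: A_def power_add omega6_pow_3 field_simps)
  ultimately show ?thesis
    by blast
qed

lemma no_three_orthogonal_unimodular_pairs:
  assumes "cmod x1 = 1" "cmod x2 = 1" "cmod x3 = 1" "cmod y1 = 1" "cmod y2 = 1" "cmod y3 = 1"
    and "cnj x1 * x2 + cnj y1 * y2 = 0" "cnj x1 * x3 + cnj y1 * y3 = 0" "cnj x2 * x3 + cnj y2 * y3 = 0"
  shows False
proof -
  have "x2 * y1 = - x1 * y2" "x3 * y1 = - x1 * y3" "x3 * y2 = - x2 * y3"
    using assms by (metis unimodular_orthogonal_pair)+
  then have "x3 * y2 * (x2 * y1) = - (x3 * y1) * (x2 * y2)"
    by (simp add: algebra_simps)
  then have "2 * (x3 * y1 * x2 * y2) = 0"
    by (simp add: algebra_simps)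
  then show False
    using assms(1-6) by auto
qed

section \<open>Dephasing and sign-related columns\<close>

definition unimodular6 :: "cmat \<Rightarrow> bool" where
  "unimodular6 H \<longleftrightarrow> (\<forall>j<6. \<forall>k<6. cmod (H j k) = 1)"

lemma hadamard6_unimodular6: "hadamard6 H \<Longrightarrow> unimodular6 H"
  by (simp add: hadamard6_def unimodular6_def)

lemma unimodular6_nonzero: "unimodular6 H \<Longrightarrow> j < 6 \<Longrightarrow> k < 6 \<Longrightarrow> H j k \<noteq> 0"
  unfolding unimodular6_def by (metis norm_zero zero_neq_one)

definition dephase :: "cmat \<Rightarrow> cmat" where
  "dephase H = (\<lambda>j k. if j < 6 \<and> k < 6 then H j k * H 0 0 / (H j 0 * H 0 k) else 0)"

lemma dephase_unique:
  assumes "unimodular6 H" and M: "\<forall>j<6. \<forall>k<6. M j k = d1 j * H j k * d2 k"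
    and ones: "\<forall>k<6. M 0 k = 1" "\<forall>j<6. M j 0 = 1"
    and outside: "\<forall>j k. \<not> (j < 6 \<and> k < 6) \<longrightarrow> M j k = 0"
  shows "M = dephase H"
proof (intro ext)
  fix j k
  show "M j k = dephase H j k"
  proof (cases "j < 6 \<and> k < 6")
    case True
    have e: "d1 j * H j 0 * d2 0 = 1" "d1 0 * H 0 k * d2 k = 1" "d1 0 * H 0 0 * d2 0 = 1"
      using True M ones by simp_all
    have "d1 j * d2 k * (H j 0 * H 0 k) = d1 j * d2 k * (H j 0 * H 0 k) * (d1 0 * H 0 0 * d2 0)"
      using e(3) by simp
    also have "\<dots> = H 0 0 * (d1 j * H j 0 * d2 0) * (d1 0 * H 0 k * d2 k)"
      by (simp add: mult_ac)
    also have "\<dots> = H 0 0"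
      using e(1,2) by simp
    finally have "d1 j * d2 k = H 0 0 / (H j 0 * H 0 k)"
      using True assms(1) unimodular6_nonzero by (simp add: eq_divide_eq)
    moreover have "M j k = d1 j * d2 k * H j k"
      using True M by (simp add: mult_ac)
    ultimately show ?thesis
      using True by (simp add: dephase_def)
  next
    case False
    then show ?thesis
      using outside unfolding dephase_def by presburger
  qed
qed

lemma dephased_eq_dephase:
  assumes "unimodular6 H"
  shows "dephased H = dephase H"
  unfolding dephased_def
proof (rule the_equality, intro conjI)
  show "\<exists>d1 d2. (\<forall>j<6. cmod (d1 j) = 1) \<and> (\<forall>k<6. cmod (d2 k) = 1) \<and>
        (\<forall>j<6. \<forall>k<6. dephase H j k = d1 j * H j k * d2 k)"
    by (rule exI[of _ "\<lambda>j. H 0 0 / H j 0"], rule exI[of _ "\<lambda>k. 1 / H 0 k"])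
      (use assms in \<open>simp add: unimodular6_def dephase_def norm_divide\<close>)
  show "\<forall>k<6. dephase H 0 k = 1" "\<forall>j<6. dephase H j 0 = 1"
    using assms unimodular6_nonzero by (simp_all add: dephase_def)
  show "\<forall>j k. \<not> (j < 6 \<and> k < 6) \<longrightarrow> dephase H j k = 0"
    by (simp add: dephase_def)
qed (use assms dephase_unique in blast)

definition sign_related_cols :: "cmat \<Rightarrow> nat \<Rightarrow> nat \<Rightarrow> bool" where
  "sign_related_cols H a b \<longleftrightarrow>
     (\<exists>c e. (\<forall>j<6. e j \<in> {1, -1}) \<and> (\<forall>j<6. H j b = c * e j * H j a))"

lemma sign_related_cols_iff_ratio:
  assumes "unimodular6 H" "a < 6" "b < 6"
  shows "sign_related_cols H a b \<longleftrightarrow>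
    (\<forall>j<6. (H j b / H j a) / (H 0 b / H 0 a) \<in> {1, -1})"
proof
  assume "sign_related_cols H a b"
  then obtain c e where e: "\<forall>j<6. e j \<in> {1, -1}" and col: "\<forall>j<6. H j b = c * e j * H j a"
    unfolding sign_related_cols_def by blast
  have ratio: "H j b / H j a = c * e j" if "j < 6" for j
  proof -
    have "H j a \<noteq> 0"
      using assms that unimodular6_nonzero by blast
    then show ?thesis
      using col that by simp
  qed
  have "c \<noteq> 0"
    using col assms unimodular6_nonzero[of H 0 b] by auto
  show "\<forall>j<6. (H j b / H j a) / (H 0 b / H 0 a) \<in> {1, -1}"
  proof (intro allI impI)
    fix j :: nat assume "j < 6"
    then have "(H j b / H j a) / (H 0 b / H 0 a) = e j / e 0"
      using ratio[of j] ratio[of 0] \<open>c \<noteq> 0\<close> by simp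
    moreover have "e j = 1 \<or> e j = -1" "e 0 = 1 \<or> e 0 = -1"
      using e \<open>j < 6\<close> by auto
    then have "e j / e 0 \<in> {1, -1}"
      by auto
    ultimately show "(H j b / H j a) / (H 0 b / H 0 a) \<in> {1, -1}"
      by simp
  qed
next
  assume ratio: "\<forall>j<6. (H j b / H j a) / (H 0 b / H 0 a) \<in> {1, -1}"
  have "H 0 b / H 0 a \<noteq> 0"
    using assms unimodular6_nonzero by simp
  then have "\<forall>j<6. H j b = H 0 b / H 0 a * ((H j b / H j a) / (H 0 b / H 0 a)) * H j a"
    using assms unimodular6_nonzero by simp
  with ratio show "sign_related_cols H a b"
    unfolding sign_related_cols_def
    by (intro exI[of _ "H 0 b / H 0 a"] exI[of _ "\<lambda>j. (H j b / H j a) / (H 0 b / H 0 a)"]) simp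
qed

lemma ER_cols_dephase_iff:
  assumes "unimodular6 H"
  shows "ER_cols (dephase H) a b \<longleftrightarrow> a < 6 \<and> b < 6 \<and> a \<noteq> b \<and> sign_related_cols H a b"
proof (cases "a < 6 \<and> b < 6")
  case True
  have "cnj (dephase H j a) * dephase H j b = (H j b / H j a) / (H 0 b / H 0 a)" if "j < 6" for j
  proof -
    have "cmod (dephase H j a) = 1"
      using assms True that by (simp add: unimodular6_def dephase_def norm_divide norm_mult)
    then have "cnj (dephase H j a) = inverse (dephase H j a)"
      by (rule unimodular_cnj_eq_inverse)
    then show ?thesis
      using assms True that unimodular6_nonzero[OF assms] by (simp add: dephase_def field_simps)
  qed
  then show ?thesis
    using assms True by (simp add: ER_cols_def sign_related_cols_iff_ratio)
next
  case False
  then show ?thesis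
    by (auto simp: ER_cols_def)
qed

lemma equiv6I:
  assumes "bij_betw f1 {..<6} {..<6}" "bij_betw f2 {..<6} {..<6}"
    and "\<forall>i<6. cmod (u i) = 1" "\<forall>l<6. cmod (v l) = 1"
    and "\<forall>i<6. \<forall>l<6. H (f1 i) (f2 l) = u i * M i l * v l"
  shows "equiv6 M H"
proof -
  define p1 where "p1 = inv_into {..<6} f1"
  define p2 where "p2 = inv_into {..<6} f2"
  have bij: "bij_betw p1 {..<6} {..<6}" "bij_betw p2 {..<6} {..<6}"
    using assms(1,2) by (simp_all add: p1_def p2_def bij_betw_inv_into)
  have inv: "\<And>j. j < 6 \<Longrightarrow> f1 (p1 j) = j" "\<And>j. j < 6 \<Longrightarrow> f2 (p2 j) = j"
    using assms(1,2) by (simp_all add: p1_def p2_def bij_betw_inv_into_right)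
  have range: "\<And>j. j < 6 \<Longrightarrow> p1 j < 6" "\<And>j. j < 6 \<Longrightarrow> p2 j < 6"
    using bij by (auto dest: bij_betwE)
  show ?thesis
    unfolding equiv6_def
  proof (intro exI conjI)
    show "\<forall>j<6. cmod (u (p1 j)) = 1" "\<forall>k<6. cmod (v (p2 k)) = 1"
      using assms(3,4) range by auto
    show "\<forall>j<6. \<forall>k<6. H j k = u (p1 j) * M (p1 j) (p2 k) * v (p2 k)"
      using assms(5) range inv by metis
  qed (use bij in auto)
qed

lemma equiv6_scale_rows:
  assumes "equiv6 M G" "\<forall>j<6. cmod (u j) = 1" "\<forall>j<6. \<forall>k<6. H j k = u j * G j k"
  shows "equiv6 M H"
proof -
  obtain d1 d2 p1 p2 where d: "\<forall>j<6. cmod (d1 j) = 1" "\<forall>k<6. cmod (d2 k) = 1"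
    "bij_betw p1 {..<6} {..<6}" "bij_betw p2 {..<6} {..<6}"
    "\<forall>j<6. \<forall>k<6. G j k = d1 j * M (p1 j) (p2 k) * d2 k"
    using assms(1) unfolding equiv6_def by blast
  have "\<forall>j<6. \<forall>k<6. H j k = (u j * d1 j) * M (p1 j) (p2 k) * d2 k"
    using assms(3) d(5) by (simp add: mult.assoc)
  moreover have "\<forall>j<6. cmod (u j * d1 j) = 1"
    using assms(2) d(1) by (simp add: norm_mult)
  ultimately show ?thesis
    unfolding equiv6_def using d(2-4)
    by (intro exI[of _ "\<lambda>j. u j * d1 j"] exI[of _ d2] exI[of _ p1] exI[of _ p2]) simp
qed

lemma hadamard6_scale_rows:
  assumes "hadamard6 H" "\<forall>j<6. cmod (u j) = 1"
  shows "hadamard6 (\<lambda>j k. u j * H j k)"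
proof -
  have "(\<Sum>j<6. cnj (u j * H j k) * (u j * H j l)) = (\<Sum>j<6. cnj (H j k) * H j l)" for k l
  proof (rule sum.cong)
    fix j :: nat
    assume "j \<in> {..<6}"
    then have "cnj (u j) * u j = 1"
      using assms(2) unimodular_cnj_mult by simp
    then show "cnj (u j * H j k) * (u j * H j l) = cnj (H j k) * H j l"
      by (metis complex_cnj_mult mult.assoc mult.left_commute mult_1)
  qed simp
  then show ?thesis
    using assms unfolding hadamard6_def by (simp add: norm_mult)
qed

lemma sign_related_cols_equiv6:
  assumes "equiv6 M H" "a < 6" "b < 6" "a \<noteq> b" "sign_related_cols M a b"
  shows "\<exists>a' b'. a' < 6 \<and> b' < 6 \<and> a' \<noteq> b' \<and> sign_related_cols H a' b'"
proof -
  obtain d1 d2 p1 p2 where d: "\<forall>j<6. cmod (d1 j) = 1" "\<forall>k<6. cmod (d2 k) = 1"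
    "bij_betw p1 {..<6} {..<6}" "bij_betw p2 {..<6} {..<6}"
    "\<forall>j<6. \<forall>k<6. H j k = d1 j * M (p1 j) (p2 k) * d2 k"
    using assms(1) unfolding equiv6_def by blast
  obtain c e where e: "\<forall>j<6. e j \<in> {1, -1}" "\<forall>j<6. M j b = c * e j * M j a"
    using assms(5) unfolding sign_related_cols_def by blast
  define a' where "a' = inv_into {..<6} p2 a"
  define b' where "b' = inv_into {..<6} p2 b"
  have cols: "a' < 6" "b' < 6" "p2 a' = a" "p2 b' = b"
    using assms(2,3) d(4) bij_betw_inv_into[OF d(4)] bij_betw_inv_into_right[OF d(4)]
    by (auto simp: a'_def b'_def dest: bij_betwE)
  have rows: "\<And>j. j < 6 \<Longrightarrow> p1 j < 6"
    using d(3) by (auto dest: bij_betwE)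
  have "d2 a' \<noteq> 0"
    using d(2) cols by auto
  have "H j b' = (c * d2 b' / d2 a') * e (p1 j) * H j a'" if "j < 6" for j
  proof -
    have "H j b' = d1 j * (c * e (p1 j) * M (p1 j) a) * d2 b'"
      using d(5) e(2) cols rows that by metis
    also have "\<dots> = (c * d2 b' / d2 a') * e (p1 j) * (d1 j * M (p1 j) a * d2 a')"
      using \<open>d2 a' \<noteq> 0\<close> by (simp add: field_simps)
    also have "\<dots> = (c * d2 b' / d2 a') * e (p1 j) * H j a'"
      using d(5) cols that by metis
    finally show ?thesis .
  qed
  moreover have "\<forall>j<6. e (p1 j) \<in> {1, -1}"
    using e(1) rows by blast
  ultimately have "sign_related_cols H a' b'"
    unfolding sign_related_cols_def by (intro exI[of _ "c * d2 b' / d2 a'"] exI[of _ "e \<circ> p1"]) simp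
  moreover have "a' \<noteq> b'"
    using cols assms(4) by auto
  ultimately show ?thesis
    using cols by blast
qed

lemma sign_related_cols_F6R: "sign_related_cols (F6R \<alpha> \<beta>) 0 3"
proof -
  have "F6R \<alpha> \<beta> j 3 = 1 * (-1) ^ j * F6R \<alpha> \<beta> j 0" if "j < 6" for j
    using that by (simp add: F6R_def F6_def Rmat_def mult.commute[of j] power_mult omega6_pow_3)
  moreover have "(-1) ^ j \<in> {1, -1 :: complex}" for j :: nat
    by (cases "even j") auto
  ultimately show ?thesis
    unfolding sign_related_cols_def by (intro exI[of _ 1] exI[of _ "\<lambda>j. (-1) ^ j"]) simp
qed

lemma two_two_split:
  assumes "card W = 4" "f ` W \<subseteq> {u, v}"
    and no_three: "\<And>x y z. x \<in> W \<Longrightarrow> y \<in> W \<Longrightarrow> z \<in> W \<Longrightarrow> distinct [x, y, z] \<Longrightarrow>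
      f x = f y \<Longrightarrow> f y = f z \<Longrightarrow> False"
  obtains w1 w2 w3 w4 where "W = {w1, w2, w3, w4}" "distinct [w1, w2, w3, w4]"
    "f w1 = u" "f w2 = u" "f w3 = v" "f w4 = v"
proof -
  have fibre: "card {w \<in> W. f w = x} \<le> 2" for x
  proof (rule ccontr)
    assume "\<not> card {w \<in> W. f w = x} \<le> 2"
    then have "3 \<le> card {w \<in> W. f w = x}"
      by simp
    then obtain T where T: "T \<subseteq> {w \<in> W. f w = x}" "card T = 3"
      by (rule obtain_subset_with_card_n)
    then obtain y1 y2 y3 where "T = {y1, y2, y3}" "distinct [y1, y2, y3]"
      by (auto simp: card_3_iff)
    then show False
      using no_three[of y1 y2 y3] T(1) by simp
  qed
  define A where "A = {w \<in> W. f w = u}"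
  define B where "B = {w \<in> W. f w = v}"
  have W: "W = A \<union> B"
    using assms(2) by (auto simp: A_def B_def)
  have "finite W"
    using assms(1) by (metis card.infinite zero_neq_numeral)
  have card: "card A \<le> 2" "card B \<le> 2"
    using fibre by (simp_all add: A_def B_def)
  have "u \<noteq> v"
  proof
    assume "u = v"
    then have "W = A"
      using W by (simp add: A_def B_def)
    then show False
      using card assms(1) by simp
  qed
  then have "A \<inter> B = {}"
    by (auto simp: A_def B_def)
  moreover have "finite A" "finite B"
    using \<open>finite W\<close> by (simp_all add: A_def B_def)
  ultimately have "card W = card A + card B"
    using W card_Un_disjoint by metis
  then have "card A = 2" "card B = 2"
    using card assms(1) by linarith+
  then obtain w1 w2 w3 w4 where A: "A = {w1, w2}" "w1 \<noteq> w2" and B: "B = {w3, w4}" "w3 \<noteq> w4"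
    by (meson card_2_iff)
  have "f w1 = u" "f w2 = u" "f w3 = v" "f w4 = v"
    using A(1) B(1) by (auto simp: A_def B_def set_eq_iff)
  moreover have "W = {w1, w2, w3, w4}"
    using W A B by auto
  ultimately show ?thesis
    using A B \<open>u \<noteq> v\<close> by (intro that[of w1 w2 w3 w4]) auto
qed

lemma sign_partition:
  fixes e :: "nat \<Rightarrow> complex"
  assumes "\<forall>j<6. e j \<in> {1, -1}" "(\<Sum>j<6. e j) = 0"
  obtains s0 s1 s2 r0 r1 r2
  where "distinct [s0, s1, s2, r0, r1, r2]" "set [s0, s1, s2, r0, r1, r2] = {..<6}"
    "e s0 = 1" "e s1 = 1" "e s2 = 1" "e r0 = -1" "e r1 = -1" "e r2 = -1"
proof -
  define S where "S = {j. j < 6 \<and> e j = 1}"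
  define R where "R = {j. j < 6 \<and> e j = -1}"
  have SR: "S \<union> R = {..<6}" "S \<inter> R = {}" "finite S" "finite R"
    using assms(1) by (auto simp: S_def R_def)
  have "0 = sum e S + sum e R"
    using assms(2) SR by (metis sum.union_disjoint)
  also have "\<dots> = of_nat (card S) - of_nat (card R)"
    by (simp add: S_def R_def)
  finally have "card S = card R"
    by simp
  moreover have "card S + card R = 6"
    using SR by (metis card_Un_disjoint card_lessThan)
  ultimately have "card S = 3" "card R = 3"
    by simp_all
  then obtain s0 s1 s2 r0 r1 r2 where "S = {s0, s1, s2}" "distinct [s0, s1, s2]"
    "R = {r0, r1, r2}" "distinct [r0, r1, r2]"
    by (auto simp: card_3_iff)
  moreover have "s0 < 6 \<and> e s0 = 1" "s1 < 6 \<and> e s1 = 1" "s2 < 6 \<and> e s2 = 1"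
    "r0 < 6 \<and> e r0 = -1" "r1 < 6 \<and> e r1 = -1" "r2 < 6 \<and> e r2 = -1"
    using calculation by (auto simp: S_def R_def set_eq_iff)
  moreover have "set [s0, s1, s2, r0, r1, r2] = {..<6}"
    using calculation SR(1) by auto
  ultimately show ?thesis
    using SR(2) by (intro that[of s0 s1 s2 r0 r1 r2]) auto
qed

definition cube_pattern :: "cmat \<Rightarrow> nat \<Rightarrow> nat \<Rightarrow> nat \<Rightarrow> nat \<Rightarrow> complex \<Rightarrow> bool" where
  "cube_pattern G j0 j1 j2 w p \<longleftrightarrow> G j1 w = G j0 w * p \<and> G j2 w = G j0 w * p\<^sup>2"

lemma cube_pattern_swap:
  assumes "cube_pattern G j0 j1 j2 w p" "p \<in> cube_roots"
  shows "cube_pattern G j0 j2 j1 w (p\<^sup>2)"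
  using assms unfolding cube_pattern_def by (auto simp: omega6_pow_reduce)

lemma cube_pattern_inner:
  assumes "cube_pattern G j0 j1 j2 w p" "cube_pattern G j0 j1 j2 w' p'"
    and "p \<in> cube_roots" "p' \<in> cube_roots"
  shows "cnj (G j0 w) * G j0 w' + cnj (G j1 w) * G j1 w' + cnj (G j2 w) * G j2 w'
    = (if p = p' then 3 * (cnj (G j0 w) * G j0 w') else 0)"
proof -
  have "cnj (G j0 w) * G j0 w' + cnj (G j1 w) * G j1 w' + cnj (G j2 w) * G j2 w'
      = cnj (G j0 w) * G j0 w' * (1 + cnj p * p' + cnj (p\<^sup>2) * p'\<^sup>2)"
    using assms(1,2) unfolding cube_pattern_def by (simp add: algebra_simps)
  then show ?thesis
    using cube_root_inner[OF assms(3,4)] by simp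
qed

section \<open>A Hadamard matrix with a column of ones next to a column of signs\<close>

locale ER_normal_form =
  fixes G :: cmat and a b s0 s1 s2 r0 r1 r2 :: nat and c :: complex
  assumes hadamard: "hadamard6 G"
    and rows: "distinct [s0, s1, s2, r0, r1, r2]" "set [s0, s1, s2, r0, r1, r2] = {..<6}"
    and cols: "a < 6" "b < 6" "a \<noteq> b"
    and col_a: "\<forall>j<6. G j a = 1"
    and col_b: "G s0 b = c" "G s1 b = c" "G s2 b = c" "G r0 b = - c" "G r1 b = - c" "G r2 b = - c"
begin

lemma rows_less: "s0 < 6" "s1 < 6" "s2 < 6" "r0 < 6" "r1 < 6" "r2 < 6"
  using rows(2) by auto

lemma unimodular: "j < 6 \<Longrightarrow> k < 6 \<Longrightarrow> cmod (G j k) = 1"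
  using hadamard by (simp add: hadamard6_def)

lemma nonzero: "j < 6 \<Longrightarrow> k < 6 \<Longrightarrow> G j k \<noteq> 0"
  using unimodular by fastforce

lemma orthogonal: "k < 6 \<Longrightarrow> l < 6 \<Longrightarrow> k \<noteq> l \<Longrightarrow> (\<Sum>j<6. cnj (G j k) * G j l) = 0"
  using hadamard by (simp add: hadamard6_def)

lemma sum_rows: "(\<Sum>j<6. f j) = (f s0 + f s1 + f s2) + (f r0 + f r1 + f r2)"
proof -
  have "(\<Sum>j<6. f j) = sum f (set [s0, s1, s2, r0, r1, r2])"
    using rows(2) by simp
  also have "\<dots> = sum_list (map f [s0, s1, s2, r0, r1, r2])"
    using rows(1) by (rule sum.distinct_set_conv_list)
  finally show ?thesis
    by (simp add: add.assoc)
qed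

lemma half_sums_vanish:
  assumes "w < 6" "w \<noteq> a" "w \<noteq> b"
  shows "G s0 w + G s1 w + G s2 w = 0" "G r0 w + G r1 w + G r2 w = 0"
proof -
  define S where "S = G s0 w + G s1 w + G s2 w"
  define R where "R = G r0 w + G r1 w + G r2 w"
  have "S + R = 0"
    using orthogonal[of a w] assms cols col_a rows_less by (simp add: sum_rows S_def R_def)
  moreover have "cnj c * (S - R) = 0"
    using orthogonal[of b w] assms cols col_b by (simp add: sum_rows algebra_simps S_def R_def)
  moreover have "cnj c \<noteq> 0"
    using unimodular[of s0 b] rows_less cols col_b by auto
  ultimately have "S = 0" "R = 0"
    by (simp_all add: eq_neg_iff_add_eq_0 flip: neg_eq_iff_add_eq_0)
  then show "G s0 w + G s1 w + G s2 w = 0" "G r0 w + G r1 w + G r2 w = 0"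
    by (simp_all add: S_def R_def)
qed

definition pattern :: "nat \<Rightarrow> complex \<Rightarrow> complex \<Rightarrow> bool" where
  "pattern w p q \<longleftrightarrow> p \<in> cube_roots \<and> q \<in> cube_roots \<and>
     cube_pattern G s0 s1 s2 w p \<and> cube_pattern G r0 r1 r2 w q"

lemma pattern_exists:
  assumes "w < 6" "w \<noteq> a" "w \<noteq> b"
  shows "\<exists>p q. pattern w p q"
  using unimodular_sum_three_zero[of "G s0 w" "G s1 w" "G s2 w"]
    unimodular_sum_three_zero[of "G r0 w" "G r1 w" "G r2 w"]
    half_sums_vanish[OF assms] unimodular rows_less assms(1)
  unfolding pattern_def cube_pattern_def by metis

lemma pattern_orthogonal:
  assumes "w < 6" "w' < 6" "w \<noteq> w'" "pattern w p q" "pattern w' p' q'"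
  shows "p = p' \<longleftrightarrow> q = q'"
    and "p = p' \<Longrightarrow> cnj (G s0 w) * G s0 w' + cnj (G r0 w) * G r0 w' = 0"
proof -
  let ?X = "cnj (G s0 w) * G s0 w'" and ?Y = "cnj (G r0 w) * G r0 w'"
  have "0 = (\<Sum>j<6. cnj (G j w) * G j w')"
    using orthogonal assms(1-3) by simp
  also have "\<dots> = (cnj (G s0 w) * G s0 w' + cnj (G s1 w) * G s1 w' + cnj (G s2 w) * G s2 w')
      + (cnj (G r0 w) * G r0 w' + cnj (G r1 w) * G r1 w' + cnj (G r2 w) * G r2 w')"
    by (rule sum_rows)
  also have "\<dots> = (if p = p' then 3 * ?X else 0) + (if q = q' then 3 * ?Y else 0)"
    using assms(4,5) cube_pattern_inner[of G s0 s1 s2 w p w' p'] cube_pattern_inner[of G r0 r1 r2 w q w' q']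
    unfolding pattern_def by presburger
  finally have sum: "(if p = p' then 3 * ?X else 0) + (if q = q' then 3 * ?Y else 0) = 0" ..
  have "?X \<noteq> 0" "?Y \<noteq> 0"
    using nonzero rows_less assms(1,2) by simp_all
  then show "p = p' \<longleftrightarrow> q = q'"
    using sum by (auto split: if_splits)
  show "?X + ?Y = 0" if "p = p'"
  proof -
    have "3 * (?X + ?Y) = 0"
      using sum that \<open>p = p' \<longleftrightarrow> q = q'\<close> by (simp add: distrib_left)
    then show ?thesis
      by (metis mult_eq_0_iff zero_neq_numeral)
  qed
qed

lemma pattern_no_three:
  assumes "w1 < 6" "w2 < 6" "w3 < 6" "distinct [w1, w2, w3]"
    and "pattern w1 p q1" "pattern w2 p q2" "pattern w3 p q3"
  shows False
  using no_three_orthogonal_unimodular_pairs[of "G s0 w1" "G s0 w2" "G s0 w3" "G r0 w1" "G r0 w2" "G r0 w3"]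
    pattern_orthogonal(2)[OF assms(1,2) _ assms(5,6)] pattern_orthogonal(2)[OF assms(1,3) _ assms(5,7)]
    pattern_orthogonal(2)[OF assms(2,3) _ assms(6,7)] assms(1-4) unimodular rows_less
  by auto

lemma equiv_F6R_of_patterns:
  assumes order: "distinct [a, w1, w3, b, w2, w4]" "set [a, w1, w3, b, w2, w4] = {..<6}"
    and pat: "pattern w1 (omega6 ^ 2) (omega6 ^ 2)" "pattern w2 (omega6 ^ 2) (omega6 ^ 2)"
      "pattern w3 (omega6 ^ 4) (omega6 ^ 4)" "pattern w4 (omega6 ^ 4) (omega6 ^ 4)"
    and rel: "cnj (G s0 w1) * G s0 w2 + cnj (G r0 w1) * G r0 w2 = 0"
      "cnj (G s0 w3) * G s0 w4 + cnj (G r0 w3) * G r0 w4 = 0"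
  shows "\<exists>\<alpha> \<beta>. equiv6 (F6R \<alpha> \<beta>) G"
proof -
  have lt: "w1 < 6" "w2 < 6" "w3 < 6" "w4 < 6"
    using order(2) by auto
  define x1 where "x1 = G s0 w1"
  define x2 where "x2 = G s0 w2"
  define x3 where "x3 = G s0 w3"
  define x4 where "x4 = G s0 w4"
  have x: "cmod x1 = 1" "cmod x2 = 1" "cmod x3 = 1" "cmod x4 = 1"
    using unimodular rows_less lt by (simp_all add: x1_def x2_def x3_def x4_def)
  have y: "cmod (G r0 w1) = 1" "cmod (G r0 w3) = 1"
    using unimodular rows_less lt by simp_all
  obtain A where A: "cmod A = 1" "G r0 w1 = x1 * omega6 * A" "G r0 w2 = x2 * omega6 ^ 4 * A"
    using unimodular_orthogonal_pair_phase[OF x(1) y(1) rel(1)[folded x1_def x2_def], of 1]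
    by auto
  obtain B where B: "cmod B = 1" "G r0 w3 = x3 * omega6 ^ 2 * B" "G r0 w4 = x4 * omega6 ^ 5 * B"
    using unimodular_orthogonal_pair_phase[OF x(3) y(2) rel(2)[folded x3_def x4_def], of 2]
    by auto
  have col_b_R: "G r0 b = omega6 ^ 3 * c" "G r1 b = omega6 ^ 3 * c" "G r2 b = omega6 ^ 3 * c"
    using col_b by (simp_all add: omega6_pow_3)
  \<comment> \<open>rows \<open>s0, r0, s1, r1, s2, r2\<close> and columns \<open>a, w1, w3, b, w2, w4\<close> become \<open>0, \<dots>, 5\<close>\<close>
  define q1 where "q1 = [s0, r0, s1, r1, s2, r2]"
  define q2 where "q2 = [a, w1, w3, b, w2, w4]"
  define v where "v = [1, x1, x3, c, x2, x4]"
  have "bij_betw (nth q1) {..<6} {..<6}"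
    using rows unfolding q1_def by (intro bij_betw_nth) auto
  moreover have "bij_betw (nth q2) {..<6} {..<6}"
    using order unfolding q2_def by (intro bij_betw_nth) auto
  moreover have "\<forall>l<6. cmod (v ! l) = 1"
    using x unimodular[of s0 b] rows_less cols col_b by (simp add: v_def all_less_6_iff)
  moreover have "\<forall>i<6. \<forall>l<6. G (q1 ! i) (q2 ! l) = 1 * F6R (Arg A) (Arg B) i l * v ! l"
    unfolding all_less_6_iff
    by (simp add: q1_def q2_def v_def x1_def x2_def x3_def x4_def F6R_def F6_def Rmat_def
        exp_i_Arg A B col_a rows_less col_b(1-3) col_b_R pat[unfolded pattern_def cube_pattern_def]
        omega6_pow_reduce omega6_mult_pow_numeral)
  ultimately show ?thesis
    by (intro exI equiv6I[where u = "\<lambda>_. 1"]) simp_all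
qed

lemma swap_rows: "ER_normal_form G a b s0 s1 s2 r0 r2 r1 c"
  using hadamard rows cols col_a col_b by unfold_locales auto

lemma patterns_pair_up:
  obtains w1 w2 w3 w4 q q'
  where "distinct [a, w1, w3, b, w2, w4]" "set [a, w1, w3, b, w2, w4] = {..<6}"
    and "pattern w1 (omega6 ^ 2) q" "pattern w2 (omega6 ^ 2) q"
      "pattern w3 (omega6 ^ 4) q'" "pattern w4 (omega6 ^ 4) q'" "q \<noteq> q'"
    and "cnj (G s0 w1) * G s0 w2 + cnj (G r0 w1) * G r0 w2 = 0"
      "cnj (G s0 w3) * G s0 w4 + cnj (G r0 w3) * G r0 w4 = 0"
proof -
  define W where "W = {..<6} - {a, b}"
  have W: "w \<in> W \<longleftrightarrow> w < 6 \<and> w \<noteq> a \<and> w \<noteq> b" for w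
    by (auto simp: W_def)
  obtain P Q where PQ: "\<And>w. w \<in> W \<Longrightarrow> pattern w (P w) (Q w)"
    using pattern_exists W by metis
  have "card W = 4"
    using cols by (simp add: W_def card_Diff_subset)
  moreover have "P ` W \<subseteq> cube_roots"
    using PQ by (auto simp: pattern_def)
  moreover have "False" if "x \<in> W" "y \<in> W" "z \<in> W" "distinct [x, y, z]" "P x = P y" "P y = P z"
    for x y z
    using pattern_no_three[of x y z "P x" "Q x" "Q y" "Q z"] PQ that W by metis
  ultimately obtain w1 w2 w3 w4 where ws: "W = {w1, w2, w3, w4}" "distinct [w1, w2, w3, w4]"
    and P: "P w1 = omega6 ^ 2" "P w2 = omega6 ^ 2" "P w3 = omega6 ^ 4" "P w4 = omega6 ^ 4"
    by (rule two_two_split) blast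
  have lt: "w1 < 6" "w2 < 6" "w3 < 6" "w4 < 6"
    using ws(1) W by blast+
  have "w1 \<in> W" "w2 \<in> W" "w3 \<in> W" "w4 \<in> W"
    using ws(1) by simp_all
  then have pat: "pattern w1 (omega6 ^ 2) (Q w1)" "pattern w2 (omega6 ^ 2) (Q w2)"
      "pattern w3 (omega6 ^ 4) (Q w3)" "pattern w4 (omega6 ^ 4) (Q w4)"
    using PQ P by metis+
  have "Q w1 = Q w2" "Q w3 = Q w4" "Q w1 \<noteq> Q w3"
    and "cnj (G s0 w1) * G s0 w2 + cnj (G r0 w1) * G r0 w2 = 0"
      "cnj (G s0 w3) * G s0 w4 + cnj (G r0 w3) * G r0 w4 = 0"
    using pattern_orthogonal[OF lt(1,2) _ pat(1,2)] pattern_orthogonal[OF lt(3,4) _ pat(3,4)]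
      pattern_orthogonal[OF lt(1,3) _ pat(1,3)] ws(2) omega6_pow_2_neq_pow_4 by auto
  moreover have "distinct [a, w1, w3, b, w2, w4]" "set [a, w1, w3, b, w2, w4] = {..<6}"
    using ws W_def cols by auto
  ultimately show ?thesis
    using that pat by metis
qed

theorem equiv_F6R: "\<exists>\<alpha> \<beta>. equiv6 (F6R \<alpha> \<beta>) G"
proof -
  obtain w1 w2 w3 w4 q q' where order: "distinct [a, w1, w3, b, w2, w4]"
      "set [a, w1, w3, b, w2, w4] = {..<6}"
    and pat: "pattern w1 (omega6 ^ 2) q" "pattern w2 (omega6 ^ 2) q"
      "pattern w3 (omega6 ^ 4) q'" "pattern w4 (omega6 ^ 4) q'" "q \<noteq> q'"
    and rel: "cnj (G s0 w1) * G s0 w2 + cnj (G r0 w1) * G r0 w2 = 0"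
      "cnj (G s0 w3) * G s0 w4 + cnj (G r0 w3) * G r0 w4 = 0"
    by (rule patterns_pair_up)
  have "q \<in> cube_roots" "q' \<in> cube_roots"
    using pat unfolding pattern_def by auto
  then consider "q = omega6 ^ 2" "q' = omega6 ^ 4" | "q = omega6 ^ 4" "q' = omega6 ^ 2"
    using pat(5) by auto
  then show ?thesis
  proof cases
    case 1
    then show ?thesis
      using equiv_F6R_of_patterns[OF order] pat rel by simp
  next
    case 2
    \<comment> \<open>relabelling \<open>r1 \<leftrightarrow> r2\<close> replaces every \<open>q\<close> by \<open>q\<^sup>2\<close>, exchanging \<open>\<omega>\<^sup>2\<close> and \<open>\<omega>\<^sup>4\<close>\<close>
    interpret swapped: ER_normal_form G a b s0 s1 s2 r0 r2 r1 c
      by (rule swap_rows)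
    have "swapped.pattern w1 (omega6 ^ 2) (omega6 ^ 2)" "swapped.pattern w2 (omega6 ^ 2) (omega6 ^ 2)"
      "swapped.pattern w3 (omega6 ^ 4) (omega6 ^ 4)" "swapped.pattern w4 (omega6 ^ 4) (omega6 ^ 4)"
      using pat 2 cube_pattern_swap omega6_cube_roots_square
      unfolding pattern_def swapped.pattern_def by metis+
    then show ?thesis
      using swapped.equiv_F6R_of_patterns[OF order] rel by simp
  qed
qed

end

lemma equiv_F6R_if_sign_related_cols:
  assumes "hadamard6 H" "a < 6" "b < 6" "a \<noteq> b" "sign_related_cols H a b"
  shows "\<exists>\<alpha> \<beta>. equiv6 (F6R \<alpha> \<beta>) H"
proof -
  obtain c e where e: "\<forall>j<6. e j \<in> {1, -1}" and col_b: "\<forall>j<6. H j b = c * e j * H j a"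
    using assms(5) unfolding sign_related_cols_def by blast
  have Ha: "\<forall>j<6. cmod (H j a) = 1"
    using assms(1,2) by (simp add: hadamard6_def)
  define G where "G = (\<lambda>j k. cnj (H j a) * H j k)"
  have hadamard: "hadamard6 G"
    unfolding G_def using Ha by (intro hadamard6_scale_rows[OF assms(1)]) simp
  have Ga: "\<forall>j<6. G j a = 1" and Gb: "\<forall>j<6. G j b = c * e j"
    using Ha col_b unimodular_cnj_mult by (simp_all add: G_def mult_ac)
  have "cmod c = 1"
    using hadamard Gb e assms(3) by (force simp: hadamard6_def norm_mult)
  moreover have "(\<Sum>j<6. cnj (G j a) * G j b) = c * (\<Sum>j<6. e j)"
    using Ga Gb by (simp add: sum_distrib_left)
  moreover have "(\<Sum>j<6. cnj (G j a) * G j b) = 0"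
    using hadamard assms(2-4) by (simp add: hadamard6_def)
  ultimately have "(\<Sum>j<6. e j) = 0"
    by auto
  then obtain s0 s1 s2 r0 r1 r2 where rows: "distinct [s0, s1, s2, r0, r1, r2]"
      "set [s0, s1, s2, r0, r1, r2] = {..<6}"
    and signs: "e s0 = 1" "e s1 = 1" "e s2 = 1" "e r0 = -1" "e r1 = -1" "e r2 = -1"
    using sign_partition[OF e] by blast
  have "s0 < 6" "s1 < 6" "s2 < 6" "r0 < 6" "r1 < 6" "r2 < 6"
    using rows(2) by auto
  then have "G s0 b = c" "G s1 b = c" "G s2 b = c" "G r0 b = - c" "G r1 b = - c" "G r2 b = - c"
    using Gb signs by simp_all
  with hadamard rows assms(2-4) Ga interpret ER_normal_form G a b s0 s1 s2 r0 r1 r2 c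
    by unfold_locales
  obtain \<alpha> \<beta> where "equiv6 (F6R \<alpha> \<beta>) G"
    using equiv_F6R by blast
  moreover note Ha
  moreover have "\<forall>j<6. \<forall>k<6. H j k = H j a * G j k"
    using Ha unimodular_cnj_mult by (simp add: G_def mult.assoc[symmetric] mult.commute[of "H _ a"])
  ultimately have "equiv6 (F6R \<alpha> \<beta>) H"
    by (rule equiv6_scale_rows)
  then show ?thesis
    by blast
qed

lemma equiv_F6R_iff_sign_related_cols:
  assumes "hadamard6 H"
  shows "(\<exists>\<alpha> \<beta>. equiv6 (F6R \<alpha> \<beta>) H) \<longleftrightarrow> (\<exists>a b. a < 6 \<and> b < 6 \<and> a \<noteq> b \<and> sign_related_cols H a b)"
proof
  assume "\<exists>\<alpha> \<beta>. equiv6 (F6R \<alpha> \<beta>) H"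
  then obtain \<alpha> \<beta> where "equiv6 (F6R \<alpha> \<beta>) H"
    by blast
  then show "\<exists>a b. a < 6 \<and> b < 6 \<and> a \<noteq> b \<and> sign_related_cols H a b"
    by (rule sign_related_cols_equiv6[where a = 0 and b = 3]) (simp_all add: sign_related_cols_F6R)
qed (use equiv_F6R_if_sign_related_cols[OF assms] in blast)

lemma Max_disjoint_pairs_ne_0_iff:
  assumes "finite I" "\<And>a b. Q a b \<Longrightarrow> a \<in> I \<and> b \<in> I"
  shows "Max {card P | P. P \<subseteq> {{a, b} | a b. Q a b} \<and> pairwise disjnt P} \<noteq> 0 \<longleftrightarrow> (\<exists>a b. Q a b)"
proof -
  define E where "E = {{a, b} | a b. Q a b}"
  define X where "X = {card P | P. P \<subseteq> E \<and> pairwise disjnt P}"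
  have "finite E"
    by (rule finite_subset[of _ "Pow I"]) (use assms in \<open>auto simp: E_def\<close>)
  then have "X \<subseteq> {..card E}"
    by (auto simp: X_def intro: card_mono)
  then have "finite X"
    using finite_subset by blast
  have "0 \<in> X"
    unfolding X_def by (intro CollectI exI[of _ "{}"]) simp
  show ?thesis
    unfolding E_def[symmetric] X_def[symmetric]
  proof
    assume "Max X \<noteq> 0"
    show "\<exists>a b. Q a b"
    proof (rule ccontr)
      assume "\<nexists>a b. Q a b"
      then have "X = {0}"
        by (auto simp: X_def E_def)
      then show False
        using \<open>Max X \<noteq> 0\<close> by simp
    qed
  next
    assume "\<exists>a b. Q a b"
    then obtain a b where "Q a b"
      by blast
    then have "1 \<in> X"
      unfolding X_def by (intro CollectI exI[of _ "{{a, b}}"]) (auto simp: E_def)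
    then show "Max X \<noteq> 0"
      using \<open>finite X\<close> by (metis Max_ge not_one_le_zero le_zero_eq)
  qed
qed

lemma eta_c_ne_0_iff:
  assumes "hadamard6 H"
  shows "eta_c H \<noteq> 0 \<longleftrightarrow> (\<exists>\<alpha> \<beta>. equiv6 (F6R \<alpha> \<beta>) H)"
proof -
  have "eta_c H \<noteq> 0 \<longleftrightarrow> (\<exists>a b. ER_cols (dephase H) a b)"
    unfolding eta_c_def dephased_eq_dephase[OF hadamard6_unimodular6[OF assms]]
    by (rule Max_disjoint_pairs_ne_0_iff[of "{..<6}"]) (simp_all add: ER_cols_def)
  also have "\<dots> \<longleftrightarrow> (\<exists>a b. a < 6 \<and> b < 6 \<and> a \<noteq> b \<and> sign_related_cols H a b)"
    by (simp add: ER_cols_dephase_iff[OF hadamard6_unimodular6[OF assms]])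
  finally show ?thesis
    using equiv_F6R_iff_sign_related_cols[OF assms] by simp
qed

section \<open>Transposition\<close>

definition transpose_cmat :: "cmat \<Rightarrow> cmat" where
  "transpose_cmat H = (\<lambda>j k. H k j)"

lemma transpose_cmat_transpose_cmat [simp]: "transpose_cmat (transpose_cmat H) = H"
  by (simp add: transpose_cmat_def)

lemma hadamard6_transpose:
  assumes "hadamard6 H"
  shows "hadamard6 (transpose_cmat H)"
proof -
  \<comment> \<open>orthogonal columns make \<open>H\<^sup>* / 6\<close> a left inverse of \<open>H\<close>, hence also a right inverse\<close>
  define A where "A = mat 6 6 (\<lambda>(i, j). cnj (H j i) / 6)"
  define B where "B = mat 6 6 (\<lambda>(i, j). H i j)"
  have "A * B = 1\<^sub>m 6"
  proof (rule eq_matI)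
    fix i l
    assume "i < dim_row (1\<^sub>m 6 :: complex mat)" "l < dim_col (1\<^sub>m 6 :: complex mat)"
    then have il: "i < 6" "l < 6"
      by auto
    have "(A * B) $$ (i, l) = (\<Sum>j<6. cnj (H j i) * H j l) / 6"
      using il by (simp add: A_def B_def scalar_prod_def lessThan_atLeast0 sum_divide_distrib)
    also have "\<dots> = 1\<^sub>m 6 $$ (i, l)"
    proof (cases "i = l")
      case True
      have "(\<Sum>j<6. cnj (H j i) * H j l) = (\<Sum>j<(6::nat). 1)"
        using True assms il by (intro sum.cong) (auto simp: hadamard6_def unimodular_cnj_mult)
      then show ?thesis
        using True il by simp
    next
      case False
      then show ?thesis
        using assms il by (simp add: hadamard6_def)
    qed
    finally show "(A * B) $$ (i, l) = 1\<^sub>m 6 $$ (i, l)" .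
  qed (simp_all add: A_def B_def)
  then have "B * A = 1\<^sub>m 6"
    by (rule mat_mult_left_right_inverse[rotated 2]) (simp_all add: A_def B_def)
  have "(\<Sum>j<6. cnj (H k j) * H l j) = 0" if "k < 6" "l < 6" "k \<noteq> l" for k l
  proof -
    have "(B * A) $$ (l, k) = 0"
      using \<open>B * A = 1\<^sub>m 6\<close> that by simp
    then have "(\<Sum>j<6. H l j * cnj (H k j)) / 6 = 0"
      using that by (simp add: A_def B_def scalar_prod_def lessThan_atLeast0 sum_divide_distrib)
    then show ?thesis
      by (simp add: mult.commute)
  qed
  then show ?thesis
    using assms by (simp add: hadamard6_def transpose_cmat_def)
qed

lemma equiv6_transpose:
  assumes "equiv6 M H"
  shows "equiv6 (transpose_cmat M) (transpose_cmat H)"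
proof -
  obtain d1 d2 p1 p2 where d: "\<forall>j<6. cmod (d1 j) = 1" "\<forall>k<6. cmod (d2 k) = 1"
    "bij_betw p1 {..<6} {..<6}" "bij_betw p2 {..<6} {..<6}"
    "\<forall>j<6. \<forall>k<6. H j k = d1 j * M (p1 j) (p2 k) * d2 k"
    using assms unfolding equiv6_def by blast
  have "\<forall>j<6. \<forall>k<6. transpose_cmat H j k = d2 j * transpose_cmat M (p2 j) (p1 k) * d1 k"
    using d(5) by (simp add: transpose_cmat_def mult_ac)
  then show ?thesis
    unfolding equiv6_def using d(1-4)
    by (intro exI[of _ d2] exI[of _ d1] exI[of _ p2] exI[of _ p1]) simp
qed

lemma transpose_F6R: "transpose_cmat (F6R \<alpha> \<beta>) = F6Rt \<alpha> \<beta>"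
proof -
  have "F6 k j = F6 j k" for j k
    by (simp add: F6_def mult.commute conj_commute)
  then show ?thesis
    by (simp add: transpose_cmat_def F6R_def F6Rt_def fun_eq_iff)
qed

lemma eta_r_eq_eta_c_transpose:
  assumes "unimodular6 H"
  shows "eta_r H = eta_c (transpose_cmat H)"
proof -
  have "unimodular6 (transpose_cmat H)"
    using assms by (simp add: unimodular6_def transpose_cmat_def)
  moreover have "dephase (transpose_cmat H) = transpose_cmat (dephase H)"
    by (auto simp: dephase_def transpose_cmat_def fun_eq_iff mult_ac)
  moreover have "ER_rows M = ER_cols (transpose_cmat M)" for M
    by (auto simp: ER_rows_def ER_cols_def transpose_cmat_def fun_eq_iff)
  ultimately show ?thesis
    using assms by (simp add: eta_r_def eta_c_def dephased_eq_dephase)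
qed

lemma eta_r_ne_0_iff:
  assumes "hadamard6 H"
  shows "eta_r H \<noteq> 0 \<longleftrightarrow> (\<exists>\<alpha> \<beta>. equiv6 (F6Rt \<alpha> \<beta>) H)"
proof -
  have "eta_r H \<noteq> 0 \<longleftrightarrow> (\<exists>\<alpha> \<beta>. equiv6 (F6R \<alpha> \<beta>) (transpose_cmat H))"
    using assms eta_r_eq_eta_c_transpose eta_c_ne_0_iff hadamard6_transpose hadamard6_unimodular6
    by metis
  also have "\<dots> \<longleftrightarrow> (\<exists>\<alpha> \<beta>. equiv6 (F6Rt \<alpha> \<beta>) H)"
    by (metis equiv6_transpose transpose_F6R transpose_cmat_transpose_cmat)
  finally show ?thesis .
qed

theorem proposition2:
  fixes H :: cmat
  assumes "hadamard6 H"
  shows "(\<exists>M. in_F6_2 M \<and> equiv6 M H) \<longleftrightarrow> (eta_c H \<noteq> 0 \<or> eta_r H \<noteq> 0)"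
  unfolding eta_c_ne_0_iff[OF assms] eta_r_ne_0_iff[OF assms] in_F6_2_def by blast

end
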